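(* Let $(p_n)_{n\ge1}\subset[0,1]$ with $p_n\to0$, and consider the population system with clone probability $p=p_n$ described in the context. Then, as $n\to\infty$: (a) If $0\le p_n\ll 1/\ln n$, then $Y_1^{(p_n)}(\tau_n)\to 1$ in distribution. (b) If $p_n\sim a/\ln n$ for some $a>0$, then $Y_1^{(p_n)}(\tau_n)$ converges in distribution to a geometric random variable $G$ with success parameter $e^{-a}$, i.e. $\mathbb P(G>x)=(1-e^{-a})^x$ for $x\in\{0,1,2,\dots\}$. (c) If $1/\ln n\ll p_n\ll 1$, then $n^{-p_n}Y_1^{(p_n)}(\tau_n)$ converges in distribution to a standard exponential random variable.
   Context: Let $p\in[0,1]$. Let $Z=(Z(t))_{t\ge0}$ be a standard Yule process: a continuous-time pure birth process started from $Z(0)=1$ in which each individual gives birth at rate $1$. Superpose independent mutations: each newborn child is, independently of everything else, a clone of its parent (same genetic type) with probability $p$, and a mutant carrying a new genetic type (different from all previously present types) with probability $1-p$. The ancestor has type $1$, and the successive mutants receive types $2,3,\dots$ in order of their birth. For $i\in\mathbb N$ and $t\ge0$, $Y_i^{(p)}(t)$ denotes the number of individuals of type $i$ alive at time $t$ (equal to $0$ before the first type-$i$ individual is born). Let $\tau_n=\inf\{t\ge0: Z(t)=n\}$. For sequences, $a_n\sim b_n$ means $a_n/b_n\to1$, and $a_n\ll b_n$ means $a_n/b_n\to0$. *)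

theory Defs
  imports "HOL-Probability.Probability" "HOL-Library.Landau_Symbols"
begin

(* Embedded jump chain of the Yule process with clonal/mutant births.
   A state is the list of the genetic types of the individuals currently alive
   (in order of birth).  At each birth event the parent is uniform among the
   current individuals (all individuals reproduce at rate 1); the child is a
   clone of its parent with probability p, otherwise it gets a brand-new type,
   namely the next unused integer (types are 1,2,3,... in order of appearance;
   there are no deaths, so the next type is Max + 1). *)
definition yule_step :: "real \<Rightarrow> nat list \<Rightarrow> nat list pmf" where
  "yule_step p xs =
     do { i \<leftarrow> pmf_of_set {..<length xs};
          c \<leftarrow> bernoulli_pmf p;
          return_pmf (xs @ [if c then xs ! i else Suc (Max (set xs))]) }"

(* Law of the type configuration at time tau_n (the n-th individual is born),
   starting at time 0 from a single ancestor of type 1. *)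
definition yule_types_at :: "real \<Rightarrow> nat \<Rightarrow> nat list pmf" where
  "yule_types_at p n = ((\<lambda>M. bind_pmf M (yule_step p)) ^^ (n - 1)) (return_pmf [1])"

definition Y1_at_tau :: "real \<Rightarrow> nat \<Rightarrow> nat pmf" where
  "Y1_at_tau p n = map_pmf (\<lambda>xs. length (filter (\<lambda>t. t = 1) xs)) (yule_types_at p n)"

end

theory Submission
  imports Defs "HOL-Computational_Algebra.Polynomial_FPS"
begin

text \<open>
  Observed at successive births, the number of type-1 individuals is a Markov chain: when the
  population has m members, k of them of type 1, the next birth raises k by one with probability
  p k / m. After N births its tail is P(K_N > y) = sum_{s \<le> N} [x^s] H(x)^y with
  H(x) = 1 - (1 - x)^p, because both sides satisfy the same recursion in N; on the side of the
  series this recursion is the differential equation (1 - x) H' = p (1 - H). The coefficients of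
  H are nonnegative and those of degree at most N sum to 1 - Pi_N, where
  Pi_N = prod_{m \<le> N} (1 - p/m). Bounding the truncated coefficient sum of H^y from above by
  the full sum and from below through the first moment gives
  (1 - Pi_N)^y - 2 p y Pi_N \<le> P(K_N > y) \<le> (1 - Pi_N)^y.
  As Pi_{n-1} ~ n^(-p) uniformly for small p, Y_1(tau_n) is close to a geometric variable with
  success parameter n^(-p_n); the three regimes are p_n ln n tending to 0, to a, and to infinity.
\<close>

section \<open>The type-1 count as a birth chain\<close>

definition type1_count :: "nat list \<Rightarrow> nat" where
  "type1_count xs = length (filter (\<lambda>t. t = 1) xs)"

definition count_step :: "real \<Rightarrow> nat \<Rightarrow> nat \<Rightarrow> nat pmf" where
  "count_step p m k = map_pmf (\<lambda>b. if b then Suc k else k) (bernoulli_pmf (p * real k / real m))"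

fun count_chain :: "real \<Rightarrow> nat \<Rightarrow> nat pmf" where
  "count_chain p 0 = return_pmf 1"
| "count_chain p (Suc j) = bind_pmf (count_chain p j) (count_step p (Suc j))"

abbreviation yule_iterate :: "real \<Rightarrow> nat \<Rightarrow> nat list pmf" where
  "yule_iterate p j \<equiv> ((\<lambda>M. bind_pmf M (yule_step p)) ^^ j) (return_pmf [1])"

lemma pmf_bool_eqI:
  fixes A B :: "bool pmf"
  assumes "pmf A True = pmf B True"
  shows "A = B"
proof (rule pmf_eqI)
  fix b
  show "pmf A b = pmf B b"
    using assms by (cases b) (auto simp: pmf_False_conv_True[of A] pmf_False_conv_True[of B])
qed

lemma ratio_le_1:
  fixes p :: real
  assumes "0 \<le> p" "p \<le> 1" "k \<le> m" "0 < m"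
  shows "p * real k / real m \<le> 1"
proof -
  have "p * real k \<le> 1 * real m"
    using assms by (intro mult_mono) auto
  then show ?thesis
    using assms by (simp add: divide_le_eq)
qed

lemma map_pmf_type1_count_yule_step:
  assumes p: "0 \<le> p" "p \<le> 1" and len: "length xs = m" and m: "0 < m" and one: "1 \<in> set xs"
  shows "map_pmf type1_count (yule_step p xs) = count_step p m (type1_count xs)"
proof -
  define k where "k = type1_count xs"
  have mutant_not_1: "Suc (Max (set xs)) \<noteq> 1"
    using Max_ge[OF finite_set one] by simp
  have count_append: "type1_count (xs @ [if c then xs ! i else Suc (Max (set xs))])
      = (if c \<and> xs ! i = 1 then Suc k else k)" for c i
    using mutant_not_1 by (auto simp: type1_count_def k_def)
  define B where
    "B = bind_pmf (pmf_of_set {..<m}) (\<lambda>i. bind_pmf (bernoulli_pmf p) (\<lambda>c. return_pmf (c \<and> xs ! i = 1)))"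
  have "map_pmf type1_count (yule_step p xs) = map_pmf (\<lambda>b. if b then Suc k else k) B"
    unfolding yule_step_def B_def len by (simp add: map_bind_pmf count_append)
  moreover have "B = bernoulli_pmf (p * real k / real m)"
  proof (rule pmf_bool_eqI)
    have card_type1: "card {i\<in>{..<m}. xs ! i = 1} = k"
      unfolding k_def type1_count_def len[symmetric] length_filter_conv_card
      by (rule arg_cong[where f = card]) auto
    have clone_and: "bind_pmf (bernoulli_pmf p) (\<lambda>c. return_pmf (c \<and> P))
        = (if P then bernoulli_pmf p else return_pmf False)" for P
      by (cases P) (simp_all add: bind_return_pmf')
    have "pmf B True = (\<Sum>i<m. (if xs ! i = 1 then p else 0)) / real m"
      unfolding B_def pmf_bind clone_and using m p
      by (auto simp add: integral_pmf_of_set lessThan_empty_iff pmf_bind intro!: sum.cong)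
    also have "(\<Sum>i<m. (if xs ! i = 1 then p else 0)) = p * real k"
      using card_type1 by (simp add: sum.If_cases Int_def)
    finally have "pmf B True = p * real k / real m" .
    moreover have "k \<le> m"
      unfolding k_def type1_count_def len[symmetric] by simp
    ultimately show "pmf B True = pmf (bernoulli_pmf (p * real k / real m)) True"
      using ratio_le_1[OF p _ m] p by (simp add: pmf_bernoulli_True)
  qed
  ultimately show ?thesis
    unfolding count_step_def k_def by simp
qed

lemma set_pmf_yule_iterate:
  assumes "xs \<in> set_pmf (yule_iterate p j)"
  shows "length xs = Suc j \<and> 1 \<in> set xs"
  using assms
proof (induction j arbitrary: xs)
  case 0
  then show ?case by simp
next
  case (Suc j)
  then obtain ys where ys: "ys \<in> set_pmf (yule_iterate p j)" "xs \<in> set_pmf (yule_step p ys)"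
    by auto
  then have "\<exists>v. xs = ys @ [v]"
    unfolding yule_step_def by auto
  with Suc.IH[OF ys(1)] show ?case by auto
qed

lemma map_pmf_type1_count_yule_iterate:
  assumes p: "0 \<le> p" "p \<le> 1"
  shows "map_pmf type1_count (yule_iterate p j) = count_chain p j"
proof (induction j)
  case 0
  then show ?case by (simp add: type1_count_def)
next
  case (Suc j)
  have "map_pmf type1_count (yule_iterate p (Suc j))
      = bind_pmf (yule_iterate p j) (\<lambda>xs. map_pmf type1_count (yule_step p xs))"
    by (simp add: map_bind_pmf)
  also have "\<dots> = bind_pmf (yule_iterate p j) (\<lambda>xs. count_step p (Suc j) (type1_count xs))"
  proof (rule bind_pmf_cong[OF refl])
    fix xs
    assume "xs \<in> set_pmf (yule_iterate p j)"
    from set_pmf_yule_iterate[OF this]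
    show "map_pmf type1_count (yule_step p xs) = count_step p (Suc j) (type1_count xs)"
      by (intro map_pmf_type1_count_yule_step[OF p]) auto
  qed
  also have "\<dots> = bind_pmf (map_pmf type1_count (yule_iterate p j)) (count_step p (Suc j))"
    by (simp add: bind_map_pmf)
  finally show ?case
    using Suc.IH by simp
qed

lemma Y1_at_tau_eq_count_chain:
  "0 \<le> p \<Longrightarrow> p \<le> 1 \<Longrightarrow> Y1_at_tau p n = count_chain p (n - 1)"
  using map_pmf_type1_count_yule_iterate[of p "n - 1"]
  by (simp add: Y1_at_tau_def yule_types_at_def type1_count_def[abs_def])

lemma set_pmf_count_chain:
  "set_pmf (count_chain p N) \<subseteq> {1..Suc N}"
proof (induction N)
  case 0
  then show ?case by simp
next
  case (Suc N)
  have "set_pmf (count_step p m k) \<subseteq> {k, Suc k}" for m k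
    unfolding count_step_def by auto
  with Suc show ?case by fastforce
qed

lemma measure_bind_pmf_finite_support:
  assumes "finite S" "set_pmf M \<subseteq> S"
  shows "measure (bind_pmf M f) A = (\<Sum>x\<in>S. measure (f x) A * pmf M x)"
proof -
  have "emeasure (measure_pmf (bind_pmf M f)) A = (\<integral>\<^sup>+x. emeasure (f x) A \<partial>measure_pmf M)"
    by (rule emeasure_bind_pmf)
  also have "\<dots> = (\<integral>\<^sup>+x. ennreal (measure (f x) A) \<partial>measure_pmf M)"
    by (simp add: measure_pmf.emeasure_eq_measure)
  also have "\<dots> = (\<Sum>x\<in>S. ennreal (measure (f x) A) * pmf M x)"
    using assms by (intro nn_integral_measure_pmf_support) auto
  also have "\<dots> = ennreal (\<Sum>x\<in>S. measure (f x) A * pmf M x)"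
    by (subst sum_ennreal[symmetric]) (auto simp: ennreal_mult)
  finally show ?thesis
    by (simp add: measure_pmf.emeasure_eq_measure sum_nonneg)
qed

lemma count_step_tail:
  assumes "k \<le> m" "0 < m" "0 \<le> p" "p \<le> 1"
  shows "measure (count_step p m k) {j. y < j}
       = (if y < k then 1 else if k = y then p * real k / real m else 0)"
proof -
  consider "y < k" | "k = y" | "k < y" by linarith
  then show ?thesis
  proof cases
    case 1
    then have "(\<lambda>b. if b then Suc k else k) -` {j. y < j} = UNIV" by auto
    with 1 show ?thesis unfolding count_step_def by simp
  next
    case 2
    then have "(\<lambda>b. if b then Suc k else k) -` {j. y < j} = {True}" by auto
    with 2 assms ratio_le_1[of p k m] show ?thesis
      unfolding count_step_def by (simp add: measure_pmf_single)
  next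
    case 3
    then have "(\<lambda>b. if b then Suc k else k) -` {j. y < j} = {}" by auto
    with 3 show ?thesis unfolding count_step_def by simp
  qed
qed

lemma count_chain_tail_Suc:
  assumes p: "0 \<le> p" "p \<le> 1"
  shows "measure (count_chain p (Suc N)) {j. y < j}
       = measure (count_chain p N) {j. y < j} + pmf (count_chain p N) y * (p * real y / real (Suc N))"
proof -
  let ?K = "count_chain p N" and ?q = "p * real y / real (Suc N)"
  have supp: "set_pmf ?K \<subseteq> {..Suc N}"
    using set_pmf_count_chain[of p N] by auto
  have "measure (count_chain p (Suc N)) {j. y < j}
      = (\<Sum>x\<le>Suc N. measure (count_step p (Suc N) x) {j. y < j} * pmf ?K x)"
    by (simp add: measure_bind_pmf_finite_support[OF _ supp])
  also have "\<dots> = (\<Sum>x\<le>Suc N. (if y < x then pmf ?K x else 0) + (if x = y then pmf ?K y * ?q else 0))"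
    by (intro sum.cong refl) (auto simp: count_step_tail[OF _ _ p])
  also have "\<dots> = measure ?K {j. y < j} + pmf ?K y * ?q"
  proof -
    have "(\<Sum>x\<le>Suc N. (if y < x then pmf ?K x else 0)) = measure ?K ({..Suc N} \<inter> {j. y < j})"
      by (simp add: measure_measure_pmf_finite sum.inter_restrict)
    also have "\<dots> = measure ?K {j. y < j}"
      by (rule measure_prob_cong_0) (use supp in \<open>auto simp: pmf_eq_0_set_pmf\<close>)
    finally have tail: "(\<Sum>x\<le>Suc N. (if y < x then pmf ?K x else 0)) = measure ?K {j. y < j}" .
    have point: "(\<Sum>x\<le>Suc N. (if x = y then pmf ?K y * ?q else 0)) = pmf ?K y * ?q"
    proof (cases "y \<le> Suc N")
      case False
      then have "pmf ?K y = 0"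
        using supp by (auto simp: pmf_eq_0_set_pmf)
      with False show ?thesis by (simp add: sum.delta)
    qed (cases "y = Suc N"; auto simp: sum.delta)
    show ?thesis
      unfolding sum.distrib tail point ..
  qed
  finally show ?thesis .
qed

lemma pmf_eq_tail_diff:
  fixes M :: "nat pmf"
  assumes "1 \<le> y"
  shows "pmf M y = measure M {j. y - 1 < j} - measure M {j. y < j}"
proof -
  have "{j. y - 1 < j} = {y} \<union> {j. y < j}"
    using assms by auto
  then have "measure M {j. y - 1 < j} = measure M {y} + measure M {j. y < j}"
    using measure_pmf.finite_measure_Union[of "{y}" M "{j. y < j}"] by simp
  then show ?thesis
    by (simp add: measure_pmf_single)
qed

section \<open>The tail as a coefficient sum\<close>

text \<open>\<open>no_clone_prob p N\<close> is the probability that the type-1 count is still 1 after \<open>N\<close> births.\<close>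

definition no_clone_prob :: "real \<Rightarrow> nat \<Rightarrow> real" where
  "no_clone_prob p N = (\<Prod>m=1..N. 1 - p / real m)"

definition clone_coeff :: "real \<Rightarrow> nat \<Rightarrow> real" where
  "clone_coeff p k = (if k = 0 then 0 else p / real k * no_clone_prob p (k - 1))"

text \<open>\<open>clone_fps p\<close> is the series \<open>1 - (1 - x) powr p\<close>.\<close>

definition clone_fps :: "real \<Rightarrow> real fps" where
  "clone_fps p = Abs_fps (clone_coeff p)"

lemma no_clone_prob_0 [simp]: "no_clone_prob p 0 = 1"
  by (simp add: no_clone_prob_def)

lemma no_clone_prob_Suc: "no_clone_prob p (Suc k) = no_clone_prob p k * (1 - p / real (Suc k))"
  by (simp add: no_clone_prob_def prod.cl_ivl_Suc)

lemma clone_coeff_Suc: "real (Suc k) * clone_coeff p (Suc k) = p * no_clone_prob p k"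
  by (simp add: clone_coeff_def)

lemma clone_fps_ode: "(1 - fps_X) * fps_deriv (clone_fps p) = fps_const p * (1 - clone_fps p)"
proof (rule fps_ext)
  fix n
  have lhs: "fps_nth ((1 - fps_X) * fps_deriv (clone_fps p)) n
      = real (Suc n) * clone_coeff p (Suc n) - (if n = 0 then 0 else real n * clone_coeff p n)"
    by (simp add: algebra_simps clone_fps_def)
  show "fps_nth ((1 - fps_X) * fps_deriv (clone_fps p)) n = fps_nth (fps_const p * (1 - clone_fps p)) n"
  proof (cases n)
    case 0
    then show ?thesis unfolding lhs by (simp add: clone_coeff_def clone_fps_def)
  next
    case (Suc k)
    have "real (Suc (Suc k)) * clone_coeff p (Suc (Suc k)) - real (Suc k) * clone_coeff p (Suc k)
        = - p * clone_coeff p (Suc k)"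
      unfolding clone_coeff_Suc by (simp add: no_clone_prob_Suc clone_coeff_def field_simps)
    then show ?thesis
      unfolding lhs using Suc by (simp add: clone_fps_def)
  qed
qed

lemma fps_nth_eq_sum_if_one_minus_X_mult:
  fixes F R :: "'a::comm_ring_1 fps"
  assumes "(1 - fps_X) * F = R"
  shows "fps_nth F N = (\<Sum>m\<le>N. fps_nth R m)"
proof -
  have "R = F - fps_X * F"
    using assms[symmetric] by (simp add: algebra_simps)
  then have R: "fps_nth R m = fps_nth F m - (if m = 0 then 0 else fps_nth F (m - 1))" for m
    by (simp add: fps_X_mult_nth)
  show ?thesis
    by (induction N) (simp_all add: R)
qed

lemma fps_nth_clone_fps_power_Suc:
  assumes "1 \<le> y"
  shows "real (Suc N) * fps_nth (clone_fps p ^ y) (Suc N)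
       = p * real y * (\<Sum>s\<le>N. fps_nth (clone_fps p ^ (y - 1)) s - fps_nth (clone_fps p ^ y) s)"
proof -
  define H where "H = clone_fps p"
  have Hy: "H ^ y = H * H ^ (y - 1)"
    using assms by (cases y) auto
  have "(1 - fps_X) * fps_deriv (H ^ y) = fps_const (real y) * ((1 - fps_X) * fps_deriv H) * H ^ (y - 1)"
    by (simp add: fps_deriv_power algebra_simps)
  also have "\<dots> = fps_const (p * real y) * (H ^ (y - 1) - H ^ y)"
    unfolding H_def clone_fps_ode Hy[unfolded H_def] by (simp add: algebra_simps)
  finally have "fps_nth (fps_deriv (H ^ y)) N
      = (\<Sum>m\<le>N. fps_nth (fps_const (p * real y) * (H ^ (y - 1) - H ^ y)) m)"
    by (rule fps_nth_eq_sum_if_one_minus_X_mult)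
  then show ?thesis
    by (simp add: H_def sum_distrib_left algebra_simps)
qed

lemma count_chain_tail:
  assumes p: "0 \<le> p" "p \<le> 1"
  shows "measure (count_chain p N) {j. y < j} = (\<Sum>s\<le>N. fps_nth (clone_fps p ^ y) s)"
proof (induction N arbitrary: y)
  case 0
  show ?case
    by (cases y) (simp_all add: fps_nth_power_0 clone_fps_def clone_coeff_def)
next
  case (Suc N)
  define G where "G y = (\<Sum>s\<le>N. fps_nth (clone_fps p ^ y) s)" for y
  have IH: "measure (count_chain p N) {j. y < j} = G y" for y
    unfolding G_def by (rule Suc.IH)
  show ?case
  proof (cases "y = 0")
    case True
    then show ?thesis
      unfolding count_chain_tail_Suc[OF p] using IH by (simp add: G_def)
  next
    case False
    then have y: "1 \<le> y" by simp
    have pmf_y: "pmf (count_chain p N) y = G (y - 1) - G y"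
      using pmf_eq_tail_diff[OF y, of "count_chain p N"] IH by simp
    have "real (Suc N) * fps_nth (clone_fps p ^ y) (Suc N) = p * real y * (G (y - 1) - G y)"
      using fps_nth_clone_fps_power_Suc[OF y, of N p] unfolding G_def sum_subtractf by simp
    then have "fps_nth (clone_fps p ^ y) (Suc N) = (G (y - 1) - G y) * (p * real y / real (Suc N))"
      by (simp add: field_simps del: of_nat_Suc)
    then show ?thesis
      unfolding count_chain_tail_Suc[OF p] pmf_y IH by (simp add: G_def)
  qed
qed

section \<open>Two-sided bounds on the tail\<close>

lemma no_clone_prob_nonneg: "0 \<le> p \<Longrightarrow> p \<le> 1 \<Longrightarrow> 0 \<le> no_clone_prob p N"
  unfolding no_clone_prob_def by (intro prod_nonneg) (auto simp: field_simps)

lemma no_clone_prob_le_1: "0 \<le> p \<Longrightarrow> p \<le> 1 \<Longrightarrow> no_clone_prob p N \<le> 1"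
  unfolding no_clone_prob_def by (intro prod_le_1) (auto simp: field_simps)

lemma clone_coeff_nonneg: "0 \<le> p \<Longrightarrow> p \<le> 1 \<Longrightarrow> 0 \<le> clone_coeff p k"
  unfolding clone_coeff_def using no_clone_prob_nonneg by auto

lemma sum_clone_coeff: "(\<Sum>k\<le>N. clone_coeff p k) = 1 - no_clone_prob p N"
proof (induction N)
  case 0
  then show ?case by (simp add: clone_coeff_def)
next
  case (Suc N)
  have "clone_coeff p (Suc N) = p / real (Suc N) * no_clone_prob p N"
    by (simp add: clone_coeff_def)
  then show ?case
    by (simp add: Suc.IH no_clone_prob_Suc field_simps del: of_nat_Suc)
qed

lemma sum_no_clone_prob: "(1 - p) * (\<Sum>j<N. no_clone_prob p j) = real N * no_clone_prob p N"
proof (induction N)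
  case 0
  then show ?case by simp
next
  case (Suc N)
  have "(1 - p) * (\<Sum>j<Suc N. no_clone_prob p j) = real N * no_clone_prob p N + (1 - p) * no_clone_prob p N"
    using Suc by (simp add: algebra_simps)
  also have "\<dots> = real (Suc N) * no_clone_prob p (Suc N)"
    by (simp add: no_clone_prob_Suc field_simps)
  finally show ?case .
qed

lemma sum_mult_clone_coeff: "(\<Sum>k\<le>N. real k * clone_coeff p k) = p * (\<Sum>j<N. no_clone_prob p j)"
proof (induction N)
  case 0
  then show ?case by (simp add: clone_coeff_def)
next
  case (Suc N)
  then show ?case
    using clone_coeff_Suc[of N p] by (simp add: algebra_simps del: of_nat_Suc)
qed

lemma sum_mult_clone_coeff_le:
  assumes p: "0 \<le> p" "p \<le> 1/2"
  shows "(\<Sum>k\<le>N. real k * clone_coeff p k) \<le> 2 * p * (real N * no_clone_prob p N)"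
proof -
  define X where "X = p * (real N * no_clone_prob p N)"
  have "0 \<le> X"
    unfolding X_def using p no_clone_prob_nonneg[of p N] by simp
  have "(\<Sum>j<N. no_clone_prob p j) = real N * no_clone_prob p N / (1 - p)"
    using sum_no_clone_prob[of p N] p by (simp add: eq_divide_eq mult.commute)
  then have "(\<Sum>k\<le>N. real k * clone_coeff p k) = X / (1 - p)"
    by (simp add: sum_mult_clone_coeff X_def)
  also have "\<dots> \<le> 2 * X"
    using \<open>0 \<le> X\<close> p by (simp add: divide_le_eq algebra_simps mult_left_le)
  finally show ?thesis
    by (simp add: X_def)
qed

definition clone_poly :: "real \<Rightarrow> nat \<Rightarrow> real poly" where
  "clone_poly p N = (\<Sum>k\<le>N. monom (clone_coeff p k) k)"

lemma coeff_clone_poly: "coeff (clone_poly p N) k = (if k \<le> N then clone_coeff p k else 0)"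
  unfolding clone_poly_def coeff_sum by (simp add: sum.delta)

lemma poly_clone_poly_1: "poly (clone_poly p N) 1 = 1 - no_clone_prob p N"
  unfolding clone_poly_def by (simp add: poly_sum poly_monom sum_clone_coeff)

lemma poly_pderiv_clone_poly_1: "poly (pderiv (clone_poly p N)) 1 = (\<Sum>k\<le>N. real k * clone_coeff p k)"
  using higher_pderiv_sum[of 1 "\<lambda>k. monom (clone_coeff p k) k" "{..N}"]
  unfolding clone_poly_def by (simp add: pderiv_monom poly_sum poly_monom)

lemma fps_nth_power_cong:
  fixes f g :: "'a::comm_ring_1 fps"
  assumes "\<And>k. k \<le> N \<Longrightarrow> fps_nth f k = fps_nth g k" and "s \<le> N"
  shows "fps_nth (f ^ y) s = fps_nth (g ^ y) s"
  using assms(2)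
proof (induction y arbitrary: s)
  case 0
  then show ?case by simp
next
  case (Suc y)
  then show ?case
    using assms(1) by (simp add: fps_mult_nth)
qed

lemma fps_nth_clone_fps_power:
  assumes "s \<le> N"
  shows "fps_nth (clone_fps p ^ y) s = coeff (clone_poly p N ^ y) s"
proof -
  have "fps_nth (clone_fps p ^ y) s = fps_nth (fps_of_poly (clone_poly p N) ^ y) s"
    by (rule fps_nth_power_cong[OF _ assms]) (simp add: clone_fps_def coeff_clone_poly)
  then show ?thesis
    by (simp add: fps_of_poly_power[symmetric])
qed

lemma coeff_power_nonneg:
  fixes a :: "'a::linordered_idom poly"
  assumes "\<And>k. 0 \<le> coeff a k"
  shows "0 \<le> coeff (a ^ y) k"
proof (induction y arbitrary: k)
  case 0
  then show ?case by (simp add: coeff_1)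
next
  case (Suc y)
  then show ?case
    using assms by (simp add: coeff_mult sum_nonneg)
qed

lemma sum_coeff_eq_poly_1:
  fixes Q :: "'a::comm_semiring_1 poly"
  assumes "degree Q \<le> M"
  shows "(\<Sum>s\<le>M. coeff Q s) = poly Q 1"
proof -
  have "poly Q 1 = (\<Sum>s\<le>degree Q. coeff Q s)"
    by (simp add: poly_altdef)
  also have "\<dots> = (\<Sum>s\<le>M. coeff Q s)"
    using assms by (intro sum.mono_neutral_left) (auto simp: coeff_eq_0)
  finally show ?thesis by simp
qed

lemma sum_mult_coeff_eq_poly_pderiv_1:
  fixes Q :: "'a::{comm_semiring_1,semiring_no_zero_divisors,semiring_char_0} poly"
  assumes "degree Q \<le> M"
  shows "(\<Sum>s\<le>Suc M. of_nat s * coeff Q s) = poly (pderiv Q) 1"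
proof -
  have "(\<Sum>s\<le>Suc M. of_nat s * coeff Q s) = (\<Sum>i\<le>M. coeff (pderiv Q) i)"
    by (subst sum.atMost_Suc_shift) (simp add: coeff_pderiv)
  also have "\<dots> = poly (pderiv Q) 1"
    by (rule sum_coeff_eq_poly_1) (use assms in \<open>simp add: degree_pderiv\<close>)
  finally show ?thesis .
qed

lemma sum_coeff_le_poly_1:
  fixes Q :: "real poly"
  assumes "\<And>k. 0 \<le> coeff Q k"
  shows "(\<Sum>s\<le>N. coeff Q s) \<le> poly Q 1"
proof -
  have "(\<Sum>s\<le>N. coeff Q s) \<le> (\<Sum>s\<le>N + degree Q. coeff Q s)"
    using assms by (intro sum_mono2) auto
  also have "\<dots> = poly Q 1"
    by (rule sum_coeff_eq_poly_1) simp
  finally show ?thesis .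
qed

text \<open>A Markov inequality for the coefficient sequence: the mass beyond degree \<open>N\<close>
  is at most the first moment divided by \<open>N + 1\<close>.\<close>

lemma poly_1_minus_pderiv_le_sum_coeff:
  fixes Q :: "real poly"
  assumes nonneg: "\<And>k. 0 \<le> coeff Q k"
  shows "poly Q 1 - poly (pderiv Q) 1 / real (Suc N) \<le> (\<Sum>s\<le>N. coeff Q s)"
proof -
  define M where "M = N + degree Q"
  have "poly Q 1 - poly (pderiv Q) 1 / real (Suc N)
      = (\<Sum>s\<le>Suc M. coeff Q s) - (\<Sum>s\<le>Suc M. real s * coeff Q s) / real (Suc N)"
    using sum_coeff_eq_poly_1[of Q "Suc M"] sum_mult_coeff_eq_poly_pderiv_1[of Q M]
    by (simp add: M_def)
  also have "\<dots> = (\<Sum>s\<le>Suc M. coeff Q s - real s * coeff Q s / real (Suc N))"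
    by (simp only: sum_subtractf sum_divide_distrib)
  also have "\<dots> = (\<Sum>s\<le>Suc M. coeff Q s * (1 - real s / real (Suc N)))"
    by (intro sum.cong refl) (simp add: field_simps del: of_nat_Suc)
  also have "\<dots> \<le> (\<Sum>s\<le>Suc M. if s \<le> N then coeff Q s else 0)"
  proof (intro sum_mono)
    fix s
    show "coeff Q s * (1 - real s / real (Suc N)) \<le> (if s \<le> N then coeff Q s else 0)"
    proof (cases "s \<le> N")
      case True
      then show ?thesis
        using nonneg[of s] by (simp add: mult_left_le)
    next
      case False
      then have "1 - real s / real (Suc N) \<le> 0"
        by (simp add: field_simps)
      with False nonneg[of s] show ?thesis
        by (simp add: mult_nonneg_nonpos)
    qed
  qed
  also have "\<dots> = (\<Sum>s\<le>N. coeff Q s)"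
    by (subst sum.inter_filter[symmetric]) (auto intro!: sum.cong simp: M_def)
  finally show ?thesis .
qed

lemma count_chain_tail_le:
  assumes p: "0 \<le> p" "p \<le> 1"
  shows "measure (count_chain p N) {j. y < j} \<le> (1 - no_clone_prob p N) ^ y"
proof -
  have "measure (count_chain p N) {j. y < j} = (\<Sum>s\<le>N. coeff (clone_poly p N ^ y) s)"
    by (simp add: count_chain_tail[OF p] fps_nth_clone_fps_power)
  also have "\<dots> \<le> poly (clone_poly p N ^ y) 1"
    by (intro sum_coeff_le_poly_1 coeff_power_nonneg) (simp add: coeff_clone_poly clone_coeff_nonneg[OF p])
  finally show ?thesis
    by (simp add: poly_clone_poly_1)
qed

lemma count_chain_tail_ge:
  assumes p: "0 \<le> p" "p \<le> 1/2"
  shows "(1 - no_clone_prob p N) ^ y - 2 * p * real y * no_clone_prob p N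
       \<le> measure (count_chain p N) {j. y < j}"
proof -
  have p1: "0 \<le> p" "p \<le> 1" using p by auto
  define P where "P = no_clone_prob p N"
  define Q where "Q = clone_poly p N ^ y"
  have P: "0 \<le> P" "P \<le> 1"
    unfolding P_def using no_clone_prob_nonneg[OF p1] no_clone_prob_le_1[OF p1] by auto
  have "poly (pderiv Q) 1 = real y * (1 - P) ^ (y - 1) * (\<Sum>k\<le>N. real k * clone_coeff p k)"
    by (simp add: Q_def P_def pderiv_power poly_clone_poly_1 poly_pderiv_clone_poly_1)
  also have "\<dots> \<le> real y * 1 * (2 * p * (real N * P))"
    using P p1 sum_mult_clone_coeff_le[OF p, of N]
    by (intro mult_mono power_le_one sum_nonneg mult_nonneg_nonneg clone_coeff_nonneg)
      (auto simp: P_def)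
  also have "\<dots> = (2 * p * real y * P) * real N"
    by simp
  also have "\<dots> \<le> (2 * p * real y * P) * real (Suc N)"
    using P p by (intro mult_left_mono) auto
  finally have "poly (pderiv Q) 1 / real (Suc N) \<le> 2 * p * real y * P"
    by (simp add: divide_le_eq del: of_nat_Suc)
  moreover have "measure (count_chain p N) {j. y < j} = (\<Sum>s\<le>N. coeff Q s)"
    by (simp add: count_chain_tail[OF p1] fps_nth_clone_fps_power Q_def)
  moreover have "poly Q 1 - poly (pderiv Q) 1 / real (Suc N) \<le> (\<Sum>s\<le>N. coeff Q s)"
    unfolding Q_def
    by (intro poly_1_minus_pderiv_le_sum_coeff coeff_power_nonneg)
      (simp add: coeff_clone_poly clone_coeff_nonneg[OF p1])
  ultimately show ?thesis
    by (simp add: Q_def P_def poly_clone_poly_1)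
qed

section \<open>Asymptotics of the no-clone probability\<close>

lemma sum_inverse_squares_le: "1 \<le> N \<Longrightarrow> (\<Sum>m=1..N. 1 / (real m)\<^sup>2) \<le> 2 - 1 / real N"
proof (induction N rule: dec_induct)
  case base
  then show ?case by simp
next
  case (step N)
  have "1 / (real (Suc N))\<^sup>2 \<le> 1 / (real N * real (Suc N))"
    by (rule divide_left_mono) (use step(1) in \<open>auto simp: power2_eq_square\<close>)
  also have "\<dots> = 1 / real N - 1 / real (Suc N)"
    using step(1) by (simp add: field_simps)
  finally show ?case
    using step by simp
qed

lemma harm_le_ln_plus_1: "1 \<le> N \<Longrightarrow> harm N \<le> ln (real N + 1) + (1::real)"
proof -
  assume N: "1 \<le> N"
  have "harm N - ln (real N) \<le> harm 1 - ln (real 1)"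
    using euler_mascheroni_sequence_decreasing[of 1 N] N by simp
  moreover have "ln (real N) \<le> ln (real N + 1)"
    using N by simp
  ultimately show ?thesis
    by (simp add: harm_def)
qed

lemma no_clone_prob_le_exp:
  assumes "0 \<le> q" "q \<le> 1"
  shows "no_clone_prob q N \<le> exp (- q * ln (real N + 1))"
proof -
  have "no_clone_prob q N \<le> (\<Prod>m=1..N. exp (- (q / real m)))"
    unfolding no_clone_prob_def
  proof (intro prod_mono conjI)
    fix m
    assume "m \<in> {1..N}"
    then show "0 \<le> 1 - q / real m"
      using assms by (auto simp: field_simps)
    show "1 - q / real m \<le> exp (- (q / real m))"
      using exp_ge_add_one_self[of "- (q / real m)"] by simp
  qed
  also have "\<dots> = exp (- q * harm N)"
    by (simp add: exp_sum[symmetric] harm_def sum_negf sum_distrib_left divide_inverse)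
  also have "\<dots> \<le> exp (- q * ln (real N + 1))"
    using ln_le_harm[of N] assms by (simp add: mult_left_mono)
  finally show ?thesis .
qed

lemma exp_le_no_clone_prob:
  assumes "0 \<le> q" "q \<le> 1/2" "1 \<le> N"
  shows "exp (- q * ln (real N + 1) - q - 4 * q\<^sup>2) \<le> no_clone_prob q N"
proof -
  have "(\<Prod>m=1..N. exp (- (q / real m) - 2 * (q / real m)\<^sup>2)) \<le> no_clone_prob q N"
    unfolding no_clone_prob_def
  proof (intro prod_mono conjI)
    fix m
    assume "m \<in> {1..N}"
    then have t: "0 \<le> q / real m" "q / real m \<le> 1/2"
      using assms by (auto simp: field_simps)
    then have "1 - q / real m > 0" by linarith
    with ln_one_minus_pos_lower_bound[OF t]
    show "exp (- (q / real m) - 2 * (q / real m)\<^sup>2) \<le> 1 - q / real m"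
      by (metis exp_le_cancel_iff exp_ln)
  qed simp
  also have "(\<Prod>m=1..N. exp (- (q / real m) - 2 * (q / real m)\<^sup>2))
      = exp (- q * harm N - 2 * q\<^sup>2 * (\<Sum>m=1..N. 1 / (real m)\<^sup>2))"
    by (simp add: exp_sum[symmetric] harm_def sum_negf sum_distrib_left divide_inverse sum_subtractf
        power_divide power_mult_distrib algebra_simps power_inverse)
  finally have lower: "exp (- q * harm N - 2 * q\<^sup>2 * (\<Sum>m=1..N. 1 / (real m)\<^sup>2)) \<le> no_clone_prob q N" .
  have harm: "q * harm N \<le> q * (ln (real N + 1) + 1)"
    using harm_le_ln_plus_1[OF assms(3)] assms by (intro mult_left_mono) auto
  have "0 \<le> 1 / real N"
    by simp
  then have "(\<Sum>m=1..N. 1 / (real m)\<^sup>2) \<le> 2"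
    using sum_inverse_squares_le[OF assms(3)] by linarith
  then have "2 * q\<^sup>2 * (\<Sum>m=1..N. 1 / (real m)\<^sup>2) \<le> 2 * q\<^sup>2 * 2"
    by (intro mult_left_mono) auto
  with harm have "- q * ln (real N + 1) - q - 4 * q\<^sup>2 \<le> - q * harm N - 2 * q\<^sup>2 * (\<Sum>m=1..N. 1 / (real m)\<^sup>2)"
    by (simp add: algebra_simps)
  then show ?thesis
    using lower by (meson exp_le_cancel_iff order.trans)
qed

lemma eventually_le_half: "(f :: nat \<Rightarrow> real) \<longlonglongrightarrow> 0 \<Longrightarrow> eventually (\<lambda>n. f n \<le> 1/2) sequentially"
  by (drule order_tendstoD(2)[of _ _ _ "1/2"]) (auto elim: eventually_mono)

lemma no_clone_prob_asymp:
  fixes q :: "nat \<Rightarrow> real"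
  assumes q0: "\<And>n. 0 \<le> q n" and q_lim: "q \<longlonglongrightarrow> 0"
  shows "(\<lambda>n. exp (q n * ln (real n)) * no_clone_prob (q n) (n - 1)) \<longlonglongrightarrow> 1"
proof (rule tendsto_sandwich[where f = "\<lambda>n. exp (- q n - 4 * (q n)\<^sup>2)" and h = "\<lambda>_. 1"])
  have ev: "eventually (\<lambda>n. q n \<le> 1/2 \<and> 2 \<le> n) sequentially"
    using eventually_le_half[OF q_lim] eventually_ge_at_top[of 2] by eventually_elim simp
  have n_minus_1: "real (n - 1) + 1 = real n" if "2 \<le> n" for n
    using that by simp
  show "eventually (\<lambda>n. exp (- q n - 4 * (q n)\<^sup>2)
      \<le> exp (q n * ln (real n)) * no_clone_prob (q n) (n - 1)) sequentially"
    using ev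
  proof eventually_elim
    case (elim n)
    have "exp (- q n - 4 * (q n)\<^sup>2) = exp (q n * ln (real n)) * exp (- q n * ln (real n) - q n - 4 * (q n)\<^sup>2)"
      by (simp add: exp_add[symmetric])
    also have "\<dots> \<le> exp (q n * ln (real n)) * no_clone_prob (q n) (n - 1)"
      using exp_le_no_clone_prob[of "q n" "n - 1"] elim q0[of n] n_minus_1[of n]
      by (intro mult_left_mono) auto
    finally show ?case .
  qed
  show "eventually (\<lambda>n. exp (q n * ln (real n)) * no_clone_prob (q n) (n - 1) \<le> 1) sequentially"
    using ev
  proof eventually_elim
    case (elim n)
    have "exp (q n * ln (real n)) * no_clone_prob (q n) (n - 1)
        \<le> exp (q n * ln (real n)) * exp (- q n * ln (real n))"
      using no_clone_prob_le_exp[of "q n" "n - 1"] elim q0[of n] n_minus_1[of n]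
      by (intro mult_left_mono) auto
    also have "\<dots> = 1"
      by (simp add: exp_add[symmetric])
    finally show ?case .
  qed
  have "(\<lambda>n. exp (- q n - 4 * (q n)\<^sup>2)) \<longlonglongrightarrow> exp (- 0 - 4 * 0\<^sup>2)"
    by (intro tendsto_intros q_lim)
  then show "(\<lambda>n. exp (- q n - 4 * (q n)\<^sup>2)) \<longlonglongrightarrow> 1"
    by simp
qed simp

lemma no_clone_prob_tendsto:
  fixes q :: "nat \<Rightarrow> real"
  assumes "\<And>n. 0 \<le> q n" "q \<longlonglongrightarrow> 0" and "(\<lambda>n. q n * ln (real n)) \<longlonglongrightarrow> c"
  shows "(\<lambda>n. no_clone_prob (q n) (n - 1)) \<longlonglongrightarrow> exp (- c)"
proof -
  have "(\<lambda>n. exp (- (q n * ln (real n))) * (exp (q n * ln (real n)) * no_clone_prob (q n) (n - 1)))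
      \<longlonglongrightarrow> exp (- c) * 1"
    by (intro tendsto_intros assms no_clone_prob_asymp)
  then show ?thesis
    by (simp add: mult.assoc[symmetric] exp_add[symmetric])
qed

section \<open>Limit laws\<close>

abbreviation Y1_tail :: "real \<Rightarrow> nat \<Rightarrow> nat \<Rightarrow> real" where
  "Y1_tail p n y \<equiv> measure (measure_pmf (Y1_at_tau p n)) {j. y < j}"

lemma Y1_tail_bounds:
  assumes "0 \<le> p" "p \<le> 1/2"
  shows "(1 - no_clone_prob p (n - 1)) ^ y - 2 * p * real y * no_clone_prob p (n - 1) \<le> Y1_tail p n y"
    and "Y1_tail p n y \<le> (1 - no_clone_prob p (n - 1)) ^ y"
  using count_chain_tail_ge[OF assms] count_chain_tail_le[of p] assms
  by (simp_all add: Y1_at_tau_eq_count_chain)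

lemma Y1_tail_tendsto:
  fixes p :: "nat \<Rightarrow> real"
  assumes p0: "\<And>n. 0 \<le> p n" and p_lim: "p \<longlonglongrightarrow> 0"
    and P: "(\<lambda>n. no_clone_prob (p n) (n - 1)) \<longlonglongrightarrow> P"
  shows "(\<lambda>n. Y1_tail (p n) n y) \<longlonglongrightarrow> (1 - P) ^ y"
proof (rule tendsto_sandwich[where f = "\<lambda>n. (1 - no_clone_prob (p n) (n - 1)) ^ y
      - 2 * p n * real y * no_clone_prob (p n) (n - 1)"
      and h = "\<lambda>n. (1 - no_clone_prob (p n) (n - 1)) ^ y"])
  show "eventually (\<lambda>n. (1 - no_clone_prob (p n) (n - 1)) ^ y
      - 2 * p n * real y * no_clone_prob (p n) (n - 1) \<le> Y1_tail (p n) n y) sequentially"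
    using eventually_le_half[OF p_lim] by eventually_elim (rule Y1_tail_bounds(1)[OF p0])
  show "eventually (\<lambda>n. Y1_tail (p n) n y \<le> (1 - no_clone_prob (p n) (n - 1)) ^ y) sequentially"
    using eventually_le_half[OF p_lim] by eventually_elim (rule Y1_tail_bounds(2)[OF p0])
  have "(\<lambda>n. (1 - no_clone_prob (p n) (n - 1)) ^ y - 2 * p n * real y * no_clone_prob (p n) (n - 1))
      \<longlonglongrightarrow> (1 - P) ^ y - 2 * 0 * real y * P"
    by (intro tendsto_intros p_lim P)
  then show "(\<lambda>n. (1 - no_clone_prob (p n) (n - 1)) ^ y - 2 * p n * real y * no_clone_prob (p n) (n - 1))
      \<longlonglongrightarrow> (1 - P) ^ y"
    by simp
  show "(\<lambda>n. (1 - no_clone_prob (p n) (n - 1)) ^ y) \<longlonglongrightarrow> (1 - P) ^ y"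
    by (intro tendsto_intros P)
qed

lemma tendsto_one_minus_power_exp:
  fixes q :: "nat \<Rightarrow> real" and y :: "nat \<Rightarrow> nat"
  assumes q0: "eventually (\<lambda>n. 0 \<le> q n) sequentially" and q_lim: "q \<longlonglongrightarrow> 0"
    and yq: "(\<lambda>n. real (y n) * q n) \<longlonglongrightarrow> x"
  shows "(\<lambda>n. (1 - q n) ^ y n) \<longlonglongrightarrow> exp (- x)"
proof -
  have ln_lim: "(\<lambda>n. real (y n) * ln (1 - q n)) \<longlonglongrightarrow> - x"
  proof (rule tendsto_sandwich[where f = "\<lambda>n. - (real (y n) * q n) - 2 * (real (y n) * q n) * q n"
        and h = "\<lambda>n. - (real (y n) * q n)"])
    show "eventually (\<lambda>n. - (real (y n) * q n) - 2 * (real (y n) * q n) * q n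
        \<le> real (y n) * ln (1 - q n)) sequentially"
      using eventually_le_half[OF q_lim] q0
    proof eventually_elim
      case (elim n)
      have "real (y n) * (- q n - 2 * (q n)\<^sup>2) \<le> real (y n) * ln (1 - q n)"
        using ln_one_minus_pos_lower_bound[of "q n"] elim by (intro mult_left_mono) auto
      then show ?case
        by (simp add: algebra_simps power2_eq_square)
    qed
    show "eventually (\<lambda>n. real (y n) * ln (1 - q n) \<le> - (real (y n) * q n)) sequentially"
      using eventually_le_half[OF q_lim] q0
    proof eventually_elim
      case (elim n)
      have "real (y n) * ln (1 - q n) \<le> real (y n) * (- q n)"
        using ln_le_minus_one[of "1 - q n"] elim by (intro mult_left_mono) auto
      then show ?case by simp
    qed
    have "(\<lambda>n. - (real (y n) * q n) - 2 * (real (y n) * q n) * q n) \<longlonglongrightarrow> - x - 2 * x * 0"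
      by (intro tendsto_intros yq q_lim)
    then show "(\<lambda>n. - (real (y n) * q n) - 2 * (real (y n) * q n) * q n) \<longlonglongrightarrow> - x"
      by simp
    show "(\<lambda>n. - (real (y n) * q n)) \<longlonglongrightarrow> - x"
      by (intro tendsto_intros yq)
  qed
  have "eventually (\<lambda>n. exp (real (y n) * ln (1 - q n)) = (1 - q n) ^ y n) sequentially"
    using eventually_le_half[OF q_lim] by eventually_elim (simp add: exp_of_nat_mult)
  moreover have "(\<lambda>n. exp (real (y n) * ln (1 - q n))) \<longlonglongrightarrow> exp (- x)"
    by (intro tendsto_intros ln_lim)
  ultimately show ?thesis
    by (rule Lim_transform_eventually[rotated])
qed

lemma tendsto_nat_floor_mult_divide:
  fixes E :: "nat \<Rightarrow> real"
  assumes E_pos: "\<And>n. 0 < E n" and E_lim: "filterlim E at_top sequentially" and x: "0 \<le> x"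
  shows "(\<lambda>n. real (nat \<lfloor>x * E n\<rfloor>) / E n) \<longlonglongrightarrow> x"
proof (rule tendsto_sandwich[where f = "\<lambda>n. x - inverse (E n)" and h = "\<lambda>_. x"])
  have floor: "real (nat \<lfloor>x * E n\<rfloor>) = of_int \<lfloor>x * E n\<rfloor>" for n
    using x E_pos[of n] by simp
  show "eventually (\<lambda>n. x - inverse (E n) \<le> real (nat \<lfloor>x * E n\<rfloor>) / E n) sequentially"
  proof (intro always_eventually allI)
    fix n
    have "x * E n - 1 \<le> real (nat \<lfloor>x * E n\<rfloor>)"
      unfolding floor by linarith
    then have "(x * E n - 1) / E n \<le> real (nat \<lfloor>x * E n\<rfloor>) / E n"
      using E_pos[of n] by (intro divide_right_mono) auto
    moreover have "(x * E n - 1) / E n = x - inverse (E n)"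
      using E_pos[of n] by (simp add: field_simps)
    ultimately show "x - inverse (E n) \<le> real (nat \<lfloor>x * E n\<rfloor>) / E n"
      by simp
  qed
  show "eventually (\<lambda>n. real (nat \<lfloor>x * E n\<rfloor>) / E n \<le> x) sequentially"
  proof (intro always_eventually allI)
    fix n
    have "real (nat \<lfloor>x * E n\<rfloor>) \<le> x * E n"
      unfolding floor by linarith
    then show "real (nat \<lfloor>x * E n\<rfloor>) / E n \<le> x"
      using E_pos[of n] by (simp add: field_simps)
  qed
  show "(\<lambda>n. x - inverse (E n)) \<longlonglongrightarrow> x"
    using tendsto_diff[OF tendsto_const tendsto_inverse_0_at_top[OF E_lim], of x] by simp
qed simp

lemma Y1_tail_rescaled_tendsto:
  fixes p :: "nat \<Rightarrow> real"
  assumes p0: "\<And>n. 0 \<le> p n" and p_lim: "p \<longlonglongrightarrow> 0"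
    and p_ln: "filterlim (\<lambda>n. p n * ln (real n)) at_top sequentially" and x: "0 \<le> x"
  shows "(\<lambda>n. Y1_tail (p n) n (nat \<lfloor>x * real n powr p n\<rfloor>)) \<longlonglongrightarrow> exp (- x)"
proof -
  \<comment> \<open>unlike \<open>real n powr p n\<close>, this is positive also for \<open>n = 0\<close>\<close>
  define E where "E n = exp (p n * ln (real n))" for n
  define P where "P n = no_clone_prob (p n) (n - 1)" for n
  define y where "y n = nat \<lfloor>x * E n\<rfloor>" for n
  have E_pos: "0 < E n" for n
    unfolding E_def by simp
  have E_lim: "filterlim E at_top sequentially"
    unfolding E_def by (rule filterlim_compose[OF exp_at_top p_ln])
  have EP: "(\<lambda>n. E n * P n) \<longlonglongrightarrow> 1"
    unfolding E_def P_def by (rule no_clone_prob_asymp[OF p0 p_lim])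
  have yP: "(\<lambda>n. real (y n) * P n) \<longlonglongrightarrow> x"
  proof -
    have "(\<lambda>n. (real (y n) / E n) * (E n * P n)) \<longlonglongrightarrow> x * 1"
      unfolding y_def by (intro tendsto_intros tendsto_nat_floor_mult_divide E_pos E_lim x EP)
    moreover have "(real (y n) / E n) * (E n * P n) = real (y n) * P n" for n
      using E_pos[of n] by simp
    ultimately show ?thesis
      by simp
  qed
  have P_lim: "P \<longlonglongrightarrow> 0"
  proof -
    have "(\<lambda>n. inverse (E n) * (E n * P n)) \<longlonglongrightarrow> 0 * 1"
      by (intro tendsto_intros tendsto_inverse_0_at_top E_lim EP)
    moreover have "inverse (E n) * (E n * P n) = P n" for n
      using E_pos[of n] by simp
    ultimately show ?thesis
      by (simp add: fun_eq_iff)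
  qed
  have P0: "eventually (\<lambda>n. 0 \<le> P n) sequentially"
    using eventually_le_half[OF p_lim]
    by eventually_elim (use p0 in \<open>auto simp: P_def intro: no_clone_prob_nonneg\<close>)
  have power_lim: "(\<lambda>n. (1 - P n) ^ y n) \<longlonglongrightarrow> exp (- x)"
    by (rule tendsto_one_minus_power_exp[OF P0 P_lim yP])
  have "(\<lambda>n. Y1_tail (p n) n (y n)) \<longlonglongrightarrow> exp (- x)"
  proof (rule tendsto_sandwich[where f = "\<lambda>n. (1 - P n) ^ y n - 2 * p n * (real (y n) * P n)"
        and h = "\<lambda>n. (1 - P n) ^ y n"])
    show "eventually (\<lambda>n. (1 - P n) ^ y n - 2 * p n * (real (y n) * P n)
        \<le> Y1_tail (p n) n (y n)) sequentially"
      using eventually_le_half[OF p_lim]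
      by eventually_elim (use Y1_tail_bounds(1)[OF p0] in \<open>simp add: P_def mult.assoc\<close>)
    show "eventually (\<lambda>n. Y1_tail (p n) n (y n) \<le> (1 - P n) ^ y n) sequentially"
      using eventually_le_half[OF p_lim]
      by eventually_elim (use Y1_tail_bounds(2)[OF p0] in \<open>simp add: P_def\<close>)
    have "(\<lambda>n. (1 - P n) ^ y n - 2 * p n * (real (y n) * P n)) \<longlonglongrightarrow> exp (- x) - 2 * 0 * x"
      by (intro tendsto_intros power_lim p_lim yP)
    then show "(\<lambda>n. (1 - P n) ^ y n - 2 * p n * (real (y n) * P n)) \<longlonglongrightarrow> exp (- x)"
      by simp
  qed (rule power_lim)
  moreover have "eventually (\<lambda>n. Y1_tail (p n) n (y n)
      = Y1_tail (p n) n (nat \<lfloor>x * real n powr p n\<rfloor>)) sequentially"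
    using eventually_ge_at_top[of 1]
    by eventually_elim (simp add: y_def E_def powr_def mult.commute)
  ultimately show ?thesis
    using tendsto_cong by fastforce
qed

lemma cdf_distr_nat_scaled:
  fixes M :: "nat pmf"
  assumes c: "0 < c"
  shows "cdf (distr (measure_pmf M) borel (\<lambda>k. c * real k)) x
       = (if x < 0 then 0 else 1 - measure M {j. nat \<lfloor>x / c\<rfloor> < j})"
proof -
  have "cdf (distr (measure_pmf M) borel (\<lambda>k. c * real k)) x = measure M {k. c * real k \<le> x}"
    unfolding cdf_def2 by (subst measure_distr) (auto simp: vimage_def)
  also have "\<dots> = (if x < 0 then 0 else 1 - measure M {j. nat \<lfloor>x / c\<rfloor> < j})"
  proof (cases "x < 0")
    case True
    then have "{k. c * real k \<le> x} = {}"
      using c by (auto simp: not_le intro: less_le_trans[OF _ mult_nonneg_nonneg])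
    with True show ?thesis by simp
  next
    case False
    have "{k. c * real k \<le> x} = UNIV - {j. nat \<lfloor>x / c\<rfloor> < j}"
    proof (intro set_eqI)
      fix k :: nat
      have "c * real k \<le> x \<longleftrightarrow> real k \<le> x / c"
        using c by (simp add: field_simps)
      also have "\<dots> \<longleftrightarrow> int k \<le> \<lfloor>x / c\<rfloor>"
        by (simp add: le_floor_iff)
      also have "\<dots> \<longleftrightarrow> k \<le> nat \<lfloor>x / c\<rfloor>"
        using False c by (simp add: le_nat_iff)
      finally show "k \<in> {k. c * real k \<le> x} \<longleftrightarrow> k \<in> UNIV - {j. nat \<lfloor>x / c\<rfloor> < j}"
        by auto
    qed
    with False show ?thesis
      using measure_pmf.prob_compl[of "{j. nat \<lfloor>x / c\<rfloor> < j}" M] by simp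
  qed
  finally show ?thesis .
qed

lemma measure_return_pmf_1_tail: "measure (return_pmf (1::nat)) {j. y < j} = (1 - 1) ^ y"
  by (cases y) (auto simp: indicator_def)

lemma measure_Suc_geometric_tail:
  assumes "0 < q" "q \<le> 1"
  shows "measure (map_pmf Suc (geometric_pmf q)) {j. y < j} = (1 - q) ^ y"
proof -
  have "measure (map_pmf Suc (geometric_pmf q)) {j. y < j} = measure (geometric_pmf q) (UNIV - {..<y})"
    by (simp add: vimage_def) (rule arg_cong[where f = "measure _"], auto)
  also have "\<dots> = 1 - (\<Sum>g<y. (1 - q) ^ g * q)"
    using measure_pmf.prob_compl[of "{..<y}" "geometric_pmf q"] assms
    by (simp add: measure_measure_pmf_finite)
  also have "(\<Sum>g<y. (1 - q) ^ g * q) = 1 - (1 - q) ^ y"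
    using one_diff_power_eq[of "1 - q" y] by (simp add: sum_distrib_right[symmetric])
  finally show ?thesis by simp
qed

lemma cdf_exponential_1:
  "cdf (density lborel (exponential_density 1)) x = (if x < 0 then 0 else 1 - exp (- x))"
proof -
  have "emeasure (density lborel (exponential_density 1)) {..x} = ennreal (erlang_CDF 0 1 x)"
    by (rule emeasure_erlang_density) simp
  then have "measure (density lborel (exponential_density 1)) {..x} = erlang_CDF 0 1 x"
    by (simp add: measure_def erlang_CDF_0)
  then show ?thesis
    by (simp add: cdf_def2 erlang_CDF_0)
qed

lemma tendsto_mult_ln_of_smallo:
  fixes p :: "nat \<Rightarrow> real"
  assumes p0: "\<And>n. 0 \<le> p n" and small: "p \<in> o(\<lambda>n. 1 / ln (real n))"
  shows "(\<lambda>n. p n * ln (real n)) \<longlonglongrightarrow> 0"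
proof (rule order_tendstoI)
  fix a :: real
  assume "a < 0"
  moreover have "0 \<le> ln (real n)" for n
    by (cases n) auto
  ultimately show "eventually (\<lambda>n. a < p n * ln (real n)) sequentially"
    using p0 by (intro always_eventually allI) (meson less_le_trans mult_nonneg_nonneg)
next
  fix a :: real
  assume a: "0 < a"
  have "eventually (\<lambda>n. norm (p n) \<le> (a / 2) * norm (1 / ln (real n))) sequentially"
    using landau_o.smallD[OF small, of "a/2"] a by simp
  then show "eventually (\<lambda>n. p n * ln (real n) < a) sequentially"
    using eventually_ge_at_top[of 2]
  proof eventually_elim
    case (elim n)
    then have ln: "0 < ln (real n)" by simp
    with elim(1) p0[of n] have "p n \<le> (a / 2) / ln (real n)" by simp
    with ln a show ?case by (simp add: le_divide_eq)
  qed
qed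

lemma tendsto_mult_ln_of_asymp_equiv:
  fixes p :: "nat \<Rightarrow> real"
  assumes a: "0 < a" and equiv: "p \<sim>[sequentially] (\<lambda>n. a / ln (real n))"
  shows "(\<lambda>n. p n * ln (real n)) \<longlonglongrightarrow> a"
proof -
  have "eventually (\<lambda>n. p n \<noteq> 0 \<or> a / ln (real n) \<noteq> 0) sequentially"
    using eventually_ge_at_top[of 2] by eventually_elim (use a in auto)
  from asymp_equivD_strong[OF equiv this]
  have "(\<lambda>n. a * (p n / (a / ln (real n)))) \<longlonglongrightarrow> a * 1"
    by (intro tendsto_intros)
  moreover have "a * (p n / (a / ln (real n))) = p n * ln (real n)" for n
    using a by simp
  ultimately show ?thesis by simp
qed

lemma filterlim_mult_ln_of_smallo:
  fixes p :: "nat \<Rightarrow> real"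
  assumes p0: "\<And>n. 0 \<le> p n" and small: "(\<lambda>n. 1 / ln (real n)) \<in> o(p)"
  shows "filterlim (\<lambda>n. p n * ln (real n)) at_top sequentially"
  unfolding filterlim_at_top
proof
  fix Z :: real
  define Z' where "Z' = max Z 1"
  have Z': "0 < Z'" "Z \<le> Z'"
    unfolding Z'_def by auto
  have "eventually (\<lambda>n. norm (1 / ln (real n)) \<le> (1 / Z') * norm (p n)) sequentially"
    using landau_o.smallD[OF small, of "1 / Z'"] Z' by simp
  then show "eventually (\<lambda>n. Z \<le> p n * ln (real n)) sequentially"
    using eventually_ge_at_top[of 2]
  proof eventually_elim
    case (elim n)
    then have ln: "0 < ln (real n)" by simp
    with elim(1) p0[of n] have "1 / ln (real n) \<le> p n / Z'" by simp
    with ln Z' show ?case by (simp add: field_simps)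
  qed
qed

lemma weak_conv_Y1_at_tau_nat:
  fixes p :: "nat \<Rightarrow> real" and L :: "nat pmf"
  assumes p0: "\<And>n. 0 \<le> p n" and p_lim: "p \<longlonglongrightarrow> 0"
    and P: "(\<lambda>n. no_clone_prob (p n) (n - 1)) \<longlonglongrightarrow> P"
    and L: "\<And>y. measure L {j. y < j} = (1 - P) ^ y"
  shows "weak_conv_m (\<lambda>n. distr (measure_pmf (Y1_at_tau (p n) n)) borel real)
           (distr (measure_pmf L) borel real)"
  unfolding weak_conv_m_def weak_conv_def
proof (intro allI impI)
  fix x :: real
  have cdf_nat: "cdf (distr (measure_pmf M) borel real) x
      = (if x < 0 then 0 else 1 - measure M {j. nat \<lfloor>x\<rfloor> < j})"
    for M :: "nat pmf"
    using cdf_distr_nat_scaled[of 1 M x] by simp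
  have "(\<lambda>n. 1 - Y1_tail (p n) n (nat \<lfloor>x\<rfloor>)) \<longlonglongrightarrow> 1 - (1 - P) ^ (nat \<lfloor>x\<rfloor>)"
    by (intro tendsto_intros Y1_tail_tendsto[OF p0 p_lim P])
  then show "(\<lambda>n. cdf (distr (measure_pmf (Y1_at_tau (p n) n)) borel real) x)
      \<longlonglongrightarrow> cdf (distr (measure_pmf L) borel real) x"
    unfolding cdf_nat L by simp
qed

lemma weak_conv_Y1_at_tau_rescaled:
  fixes p :: "nat \<Rightarrow> real"
  assumes p0: "\<And>n. 0 \<le> p n" and p_lim: "p \<longlonglongrightarrow> 0"
    and p_ln: "filterlim (\<lambda>n. p n * ln (real n)) at_top sequentially"
  shows "weak_conv_m (\<lambda>n. distr (measure_pmf (Y1_at_tau (p n) n)) borel (\<lambda>k. real n powr (- p n) * real k))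
           (density lborel (exponential_density 1))"
  unfolding weak_conv_m_def weak_conv_def
proof (intro allI impI)
  fix x :: real
  have "eventually (\<lambda>n. cdf (distr (measure_pmf (Y1_at_tau (p n) n)) borel (\<lambda>k. real n powr (- p n) * real k)) x
      = (if x < 0 then 0 else 1 - Y1_tail (p n) n (nat \<lfloor>x * real n powr p n\<rfloor>))) sequentially"
    using eventually_ge_at_top[of 1]
  proof eventually_elim
    case (elim n)
    then have "0 < real n powr (- p n)" by simp
    moreover have "x / real n powr (- p n) = x * real n powr p n"
      by (simp add: powr_minus divide_inverse)
    ultimately show ?case
      by (simp add: cdf_distr_nat_scaled)
  qed
  moreover have "(\<lambda>n. if x < 0 then 0 else 1 - Y1_tail (p n) n (nat \<lfloor>x * real n powr p n\<rfloor>))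
      \<longlonglongrightarrow> (if x < 0 then 0 else 1 - exp (- x))"
    by (cases "x < 0") (simp_all add: tendsto_diff[OF tendsto_const Y1_tail_rescaled_tendsto[OF p0 p_lim p_ln]])
  ultimately show "(\<lambda>n. cdf (distr (measure_pmf (Y1_at_tau (p n) n)) borel (\<lambda>k. real n powr (- p n) * real k)) x)
      \<longlonglongrightarrow> cdf (density lborel (exponential_density 1)) x"
    unfolding cdf_exponential_1 using tendsto_cong by fastforce
qed

theorem proposition2p1:
  fixes p :: "nat \<Rightarrow> real"
  assumes p_range: "\<And>n. 0 \<le> p n \<and> p n \<le> 1"
    and p_lim: "p \<longlonglongrightarrow> 0"
  shows "(p \<in> o(\<lambda>n. 1 / ln (real n)) \<longrightarrow>
           weak_conv_m (\<lambda>n. distr (measure_pmf (Y1_at_tau (p n) n)) borel real)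
                       (distr (measure_pmf (return_pmf (1::nat))) borel real))
       \<and> (\<forall>a::real. a > 0 \<longrightarrow> p \<sim>[sequentially] (\<lambda>n. a / ln (real n)) \<longrightarrow>
           weak_conv_m (\<lambda>n. distr (measure_pmf (Y1_at_tau (p n) n)) borel real)
                       (distr (measure_pmf (map_pmf Suc (geometric_pmf (exp (- a))))) borel real))
       \<and> ((\<lambda>n. 1 / ln (real n)) \<in> o(p) \<and> p \<in> o(\<lambda>n. 1) \<longrightarrow>
           weak_conv_m (\<lambda>n. distr (measure_pmf (Y1_at_tau (p n) n)) borel
                                   (\<lambda>k. real n powr (- p n) * real k))
                       (density lborel (exponential_density 1)))"
proof (intro conjI impI allI)
  have p0: "\<And>n. 0 \<le> p n"
    using p_range by simp
  let ?Y = "\<lambda>n. distr (measure_pmf (Y1_at_tau (p n) n)) borel real"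
  show "weak_conv_m ?Y (distr (measure_pmf (return_pmf (1::nat))) borel real)"
    if "p \<in> o(\<lambda>n. 1 / ln (real n))"
    using no_clone_prob_tendsto[OF p0 p_lim tendsto_mult_ln_of_smallo[OF p0 that]]
    by (intro weak_conv_Y1_at_tau_nat[OF p0 p_lim _ measure_return_pmf_1_tail]) simp
  show "weak_conv_m ?Y (distr (measure_pmf (map_pmf Suc (geometric_pmf (exp (- a))))) borel real)"
    if "a > 0" and "p \<sim>[sequentially] (\<lambda>n. a / ln (real n))" for a :: real
    using no_clone_prob_tendsto[OF p0 p_lim tendsto_mult_ln_of_asymp_equiv[OF that]]
      measure_Suc_geometric_tail[of "exp (- a)"] that(1)
    by (intro weak_conv_Y1_at_tau_nat[OF p0 p_lim]) simp_all
  show "weak_conv_m (\<lambda>n. distr (measure_pmf (Y1_at_tau (p n) n)) borel (\<lambda>k. real n powr (- p n) * real k))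
      (density lborel (exponential_density 1))"
    if "(\<lambda>n. 1 / ln (real n)) \<in> o(p) \<and> p \<in> o(\<lambda>n. 1)"
    using that
    by (intro weak_conv_Y1_at_tau_rescaled[OF p0 p_lim] filterlim_mult_ln_of_smallo[OF p0]) simp
qed

end
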